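(* Let $(S,\delta)$ be a dihedral set and $(E,\delta_E)$ an inscribed polygon with sets $E_{\mathrm{sides}}$, $E_{\mathrm{chords}}$ and a choice of matching sides $s_c\in S_c$ ($c\in E_{\mathrm{chords}}$), and let $\psi:H^\bullet(\mathcal M_{0,E})\cong H^\bullet(\mathcal M_{0,S'})\to H^\bullet(\mathcal M_{0,S})$ be the associated pullback. Let $X$ be a monomial in the classes $\omega_{c}$ for chords $c$ of $(E,\delta_E)$, and denote also by $X$ the same monomial in $H^\bullet(\mathcal M_{0,S})$ (chords of $(E,\delta_E)$ being chords of $(S,\delta)$). Then $\psi(X)-X$ is a linear combination of monomials $\omega_{c_1}\wedge\cdots\wedge\omega_{c_k}$ (chords of $(S,\delta)$) in each of which some $c_i$ crosses some chord of $E_{\mathrm{chords}}$.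
   Context: Dihedral set: finite $S$, $|S|=n\ge3$, identified with the sides of an unoriented $n$-gon up to dihedral symmetry; a chord is a pair of non-consecutive vertices; two chords cross if they meet in the interior. An inscribed polygon $(E,\delta_E)$ in $(S,\delta)$ is a polygon whose vertices are vertices of $(S,\delta)$ and whose sides are either sides or chords of $(S,\delta)$; $E_{\mathrm{sides}}\subset E$ and $E_{\mathrm{chords}}\subset E$ are its sides which are sides, resp. chords, of $(S,\delta)$. Then $S\setminus E_{\mathrm{sides}}=\bigsqcup_{c\in E_{\mathrm{chords}}}S_c$, where $S_c$ is the (nonempty, dihedrally consecutive) set of sides of $(S,\delta)$ cut off from $E$ by $c$. Choosing $s_c\in S_c$ for each $c$, let $S'=E_{\mathrm{sides}}\sqcup\{s_c\}$ with induced dihedral structure $\delta'$; the bijection $E\to S'$ (identity on $E_{\mathrm{sides}}$, $c\mapsto s_c$) is a dihedral isomorphism, inducing $\mathcal M_{0,E}\cong\mathcal M_{0,S'}$ and a correspondence of chords; $\psi$ is this identification followed by pullback along the forgetful map $\mathcal M_{0,S}\to\mathcal M_{0,S'}$. Here $\mathcal M_{0,S}$ is the moduli space of $S$-indexed distinct points on $\mathbb P^1(\mathbb C)$ modulo $\mathrm{PGL}_2(\mathbb C)$, and $\omega_c=\frac1{2\pi i}d\log u_c$ with $u_c$ Brown's dihedral coordinate (sides labelled $1..n$ in dihedral order, $c$ joining the vertex between sides $i,i+1$ to that between $j,j+1$: $u_c=\frac{(z_i-z_{j+1})(z_{i+1}-z_j)}{(z_i-z_j)(z_{i+1}-z_{j+1})}$).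 *)

theory Defs
  imports "HOL-Analysis.Analysis" "HOL-Combinatorics.Permutations"
begin

text \<open>A dihedral set of size N is labelled by sides 0..N-1 in dihedral
order. Vertex i is the vertex between side i and side (i+1) mod N. A chord is
an (ordered representative of a) pair of non-consecutive vertices.
Points of the configuration space are maps z :: nat => complex, injective on
the labels; forms on M_{0,S} are pulled back to the configuration space and
evaluated on tangent vectors v :: nat => complex.\<close>

definition ucr :: "nat \<Rightarrow> (nat \<Rightarrow> complex) \<Rightarrow> nat \<Rightarrow> nat \<Rightarrow> complex" where
  "ucr N y i j =
     ((y i - y (Suc j mod N)) * (y (Suc i mod N) - y j)) /
     ((y i - y j) * (y (Suc i mod N) - y (Suc j mod N)))"

definition dlog_dir :: "((nat \<Rightarrow> complex) \<Rightarrow> complex) \<Rightarrow> (nat \<Rightarrow> complex) \<Rightarrow> (nat \<Rightarrow> complex) \<Rightarrow> complex" where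
  "dlog_dir f z v = deriv (\<lambda>t. f (\<lambda>i. z i + t * v i)) 0 / f z"

definition omega_of :: "((nat \<Rightarrow> complex) \<Rightarrow> complex) \<Rightarrow> (nat \<Rightarrow> complex) \<Rightarrow> (nat \<Rightarrow> complex) \<Rightarrow> complex" where
  "omega_of f z v = dlog_dir f z v / (2 * complex_of_real pi * \<i>)"

definition omega_chord :: "nat \<Rightarrow> nat \<times> nat \<Rightarrow> (nat \<Rightarrow> complex) \<Rightarrow> (nat \<Rightarrow> complex) \<Rightarrow> complex" where
  "omega_chord N c = omega_of (\<lambda>y. ucr N y (fst c) (snd c))"

definition wedge :: "((nat \<Rightarrow> complex) \<Rightarrow> (nat \<Rightarrow> complex) \<Rightarrow> complex) list
    \<Rightarrow> (nat \<Rightarrow> complex) \<Rightarrow> (nat \<Rightarrow> nat \<Rightarrow> complex) \<Rightarrow> complex" where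
  "wedge fs z vs =
     (\<Sum>p | p permutes {..<length fs}.
        of_int (sign p) * (\<Prod>i<length fs. (fs ! i) z (vs (p i))))"

definition conf :: "nat \<Rightarrow> (nat \<Rightarrow> complex) \<Rightarrow> bool" where
  "conf N z \<longleftrightarrow> inj_on z {..<N}"

definition is_chord :: "nat \<Rightarrow> nat \<times> nat \<Rightarrow> bool" where
  "is_chord N c \<longleftrightarrow> fst c < N \<and> snd c < N \<and> fst c \<noteq> snd c
     \<and> snd c \<noteq> Suc (fst c) mod N \<and> fst c \<noteq> Suc (snd c) mod N"

text \<open>x lies strictly inside the cyclic arc going forward from a to b.\<close>
definition strictly_between :: "nat \<Rightarrow> nat \<Rightarrow> nat \<Rightarrow> nat \<Rightarrow> bool" where
  "strictly_between N a b x \<longleftrightarrow>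
     0 < (x + N - a) mod N \<and> (x + N - a) mod N < (b + N - a) mod N"

definition crosses :: "nat \<Rightarrow> nat \<times> nat \<Rightarrow> nat \<times> nat \<Rightarrow> bool" where
  "crosses N c d \<longleftrightarrow> distinct [fst c, snd c, fst d, snd d] \<and>
     (strictly_between N (fst c) (snd c) (fst d) \<noteq> strictly_between N (fst c) (snd c) (snd d))"

text \<open>Inscribed polygon E given by its vertex set V (vertices of the n-gon).
vert V k is the k-th vertex of E in the dihedral order; E-vertex k = vert V k.
E-side k is the side of E between vert V (k-1 mod m) and vert V k.\<close>
definition vert :: "nat set \<Rightarrow> nat \<Rightarrow> nat" where
  "vert V k = sorted_list_of_set V ! k"

definition prevk :: "nat \<Rightarrow> nat \<Rightarrow> nat" where
  "prevk m k = (k + m - 1) mod m"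

text \<open>The set S_c of sides of the n-gon cut off by E-side k (if it is a chord),
resp. the singleton of E-side k itself if it is a side of the n-gon.\<close>
definition E_side_arc :: "nat \<Rightarrow> nat set \<Rightarrow> nat \<Rightarrow> nat set" where
  "E_side_arc n V k =
     (let a = vert V (prevk (card V) k); b = vert V k in
      {x. x < n \<and> 0 < (x + n - a) mod n \<and> (x + n - a) mod n \<le> (b + n - a) mod n})"

definition E_chords :: "nat \<Rightarrow> nat set \<Rightarrow> (nat \<times> nat) set" where
  "E_chords n V = {(vert V (prevk (card V) k), vert V k) | k.
      k < card V \<and> vert V k \<noteq> Suc (vert V (prevk (card V) k)) mod n}"

text \<open>psi(omega_c) for the chord c = (k,l) of E (in E's own labelling): identify
E with S' (E-side k |-> sel k), take Brown's form on M_{0,S'} and pull it back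
along the forgetful map (restriction of coordinates to S').\<close>
definition psi_omega :: "nat set \<Rightarrow> (nat \<Rightarrow> nat) \<Rightarrow> nat \<times> nat
    \<Rightarrow> (nat \<Rightarrow> complex) \<Rightarrow> (nat \<Rightarrow> complex) \<Rightarrow> complex" where
  "psi_omega V sel c = omega_of (\<lambda>y. ucr (card V) (\<lambda>j. y (sel j)) (fst c) (snd c))"

definition E_chord_in_S :: "nat set \<Rightarrow> nat \<times> nat \<Rightarrow> nat \<times> nat" where
  "E_chord_in_S V c = (vert V (fst c), vert V (snd c))"

end

theory Submission
  imports Defs
begin

text \<open>Pulled back along the forgetful map, the dihedral coordinate of a chord \<open>c\<close> of \<open>E\<close> is the
  cross-ratio of the four chosen sides \<open>s\<close> adjacent to its ends. This cross-ratio telescopes into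
  the product of the dihedral coordinates \<open>u\<^sub>d\<close> of all chords \<open>d\<close> of \<open>S\<close> whose ends lie
  between the chosen sides at the respective ends of \<open>c\<close>, so taking \<open>d log\<close> gives
  \<open>\<psi>(\<omega>\<^sub>c) = \<omega>\<^sub>c + \<Sum> \<omega>\<^sub>d\<close>. Each such \<open>d \<noteq> c\<close> has an end strictly inside an arc cut off
  by a side of \<open>E\<close> at an end of \<open>c\<close>, and its other end outside that arc, so it crosses that side,
  which is then a chord. Expanding the wedge product multilinearly, every term except the
  leading one contains such a \<open>d\<close>.\<close>

lemma mod_less_double: "(y::nat) < 2 * n \<Longrightarrow> y mod n = (if y < n then y else y - n)"
  by (cases "y < n") (auto simp: le_mod_geq)

lemma add_diff_mod_cases:
  "(y::nat) < n \<Longrightarrow> a < n \<Longrightarrow> (y + n - a) mod n = (if a \<le> y then y - a else y + n - a)"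
  by (simp add: mod_less_double)

definition cyc_rot :: "nat \<Rightarrow> nat \<Rightarrow> nat \<Rightarrow> nat" where
  "cyc_rot n c k = (c + k) mod n"

definition cyc_unrot :: "nat \<Rightarrow> nat \<Rightarrow> nat \<Rightarrow> nat" where
  "cyc_unrot n c x = (x + n - c) mod n"

definition cyc_between :: "nat \<Rightarrow> nat \<Rightarrow> nat \<Rightarrow> bool" where
  "cyc_between a x b \<longleftrightarrow> (a < x \<and> x < b) \<or> (x < b \<and> b < a) \<or> (b < a \<and> a < x)"

lemma cyc_unrot_eq:
  "x < n \<Longrightarrow> c < n \<Longrightarrow> cyc_unrot n c x = (if c \<le> x then x - c else x + n - c)"
  unfolding cyc_unrot_def by (simp add: add_diff_mod_cases)

lemma cyc_rot_eq:
  "k < n \<Longrightarrow> c < n \<Longrightarrow> cyc_rot n c k = (if c + k < n then c + k else c + k - n)"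
  unfolding cyc_rot_def by (subst mod_less_double) auto

lemma cyc_rot_less: "0 < n \<Longrightarrow> cyc_rot n c k < n"
  by (simp add: cyc_rot_def)

lemma cyc_unrot_less: "0 < n \<Longrightarrow> cyc_unrot n c x < n"
  by (simp add: cyc_unrot_def)

lemma cyc_unrot_rot: "k < n \<Longrightarrow> c < n \<Longrightarrow> cyc_unrot n c (cyc_rot n c k) = k"
  using cyc_rot_less[of n c k] by (simp add: cyc_unrot_eq cyc_rot_eq) linarith

lemma cyc_rot_unrot: "x < n \<Longrightarrow> c < n \<Longrightarrow> cyc_rot n c (cyc_unrot n c x) = x"
  using cyc_unrot_less[of n c x] by (simp add: cyc_unrot_eq cyc_rot_eq)

lemma Suc_cyc_rot: "Suc (cyc_rot n c k) mod n = cyc_rot n c (Suc k)"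
  unfolding cyc_rot_def by (simp add: mod_Suc_eq)

lemma cyc_rot_inj: "k < n \<Longrightarrow> l < n \<Longrightarrow> c < n \<Longrightarrow> cyc_rot n c k = cyc_rot n c l \<Longrightarrow> k = l"
  by (metis cyc_unrot_rot)

lemma cyc_unrot_rebase:
  "a < n \<Longrightarrow> x < n \<Longrightarrow> c < n \<Longrightarrow>
     (x + n - a) mod n = (cyc_unrot n c x + n - cyc_unrot n c a) mod n"
  by (auto simp: cyc_unrot_eq mod_less_double)

lemma strictly_between_iff_cyc_between:
  "a < n \<Longrightarrow> x < n \<Longrightarrow> b < n \<Longrightarrow> a \<noteq> b \<Longrightarrow> strictly_between n a b x \<longleftrightarrow> cyc_between a x b"
  unfolding strictly_between_def cyc_between_def by (auto simp: add_diff_mod_cases split: if_splits)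

lemma strictly_between_cyc_rot:
  assumes "a < n" "b < n" "x < n" "c < n" "a \<noteq> b"
  shows "strictly_between n (cyc_rot n c a) (cyc_rot n c b) (cyc_rot n c x) \<longleftrightarrow> cyc_between a x b"
proof -
  have n: "0 < n" using assms by simp
  have "strictly_between n (cyc_rot n c a) (cyc_rot n c b) (cyc_rot n c x) \<longleftrightarrow>
        0 < (x + n - a) mod n \<and> (x + n - a) mod n < (b + n - a) mod n"
    unfolding strictly_between_def using assms
    by (simp add: cyc_unrot_rebase[where c = c] cyc_rot_less[OF n] cyc_unrot_rot)
  also have "\<dots> \<longleftrightarrow> cyc_between a x b"
    using strictly_between_iff_cyc_between[OF assms(1,3,2,5)] unfolding strictly_between_def .
  finally show ?thesis .
qed

lemma crosses_cyc_rot: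
  assumes "a < n" "b < n" "e1 < n" "e2 < n" "c < n"
    and "distinct [a, b, e1, e2]" and "cyc_between a e1 b \<noteq> cyc_between a e2 b"
  shows "crosses n (cyc_rot n c a, cyc_rot n c b) (cyc_rot n c e1, cyc_rot n c e2)"
  using assms unfolding crosses_def by (auto simp: strictly_between_cyc_rot dest: cyc_rot_inj)

definition cross_ratio :: "(nat \<Rightarrow> complex) \<Rightarrow> nat \<Rightarrow> nat \<Rightarrow> nat \<Rightarrow> nat \<Rightarrow> complex" where
  "cross_ratio y a a' b b' = ((y a - y b') * (y a' - y b)) / ((y a - y b) * (y a' - y b'))"

lemma ucr_eq_cross_ratio: "ucr N y i j = cross_ratio y i (Suc i mod N) j (Suc j mod N)"
  by (simp add: ucr_def cross_ratio_def)

lemma cross_ratio_commute: "cross_ratio y a a' b b' = cross_ratio y b b' a a'"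
  unfolding cross_ratio_def by (simp add: algebra_simps)

lemma cross_ratio_same: "y a \<noteq> y b \<Longrightarrow> y a \<noteq> y b' \<Longrightarrow> cross_ratio y a a b b' = 1"
  unfolding cross_ratio_def by (simp add: mult.commute)

lemma cross_ratio_mult:
  assumes "y a' \<noteq> y b" "y a' \<noteq> y b'"
  shows "cross_ratio y a a' b b' * cross_ratio y a' a'' b b' = cross_ratio y a a'' b b'"
proof -
  have "cross_ratio y a a' b b' * cross_ratio y a' a'' b b'
     = ((y a - y b') * (y a'' - y b) * ((y a' - y b) * (y a' - y b'))) /
       ((y a - y b) * (y a'' - y b') * ((y a' - y b) * (y a' - y b')))"
    unfolding cross_ratio_def by (simp add: mult_ac)
  also have "\<dots> = cross_ratio y a a'' b b'"
    unfolding cross_ratio_def using assms by (intro nonzero_mult_divide_mult_cancel_right) simp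
  finally show ?thesis .
qed

lemma cross_ratio_telescope_left:
  assumes "\<alpha> \<le> \<beta>" and "\<forall>a\<in>{\<alpha>..\<beta>}. y (X a) \<noteq> y B \<and> y (X a) \<noteq> y B'"
  shows "cross_ratio y (X \<alpha>) (X \<beta>) B B' = (\<Prod>a\<in>{\<alpha>..<\<beta>}. cross_ratio y (X a) (X (Suc a)) B B')"
  using assms
proof (induction \<beta> rule: dec_induct)
  case base
  then show ?case by (simp add: cross_ratio_same)
next
  case (step \<beta>)
  have "(\<Prod>a\<in>{\<alpha>..<Suc \<beta>}. cross_ratio y (X a) (X (Suc a)) B B')
      = cross_ratio y (X \<alpha>) (X \<beta>) B B' * cross_ratio y (X \<beta>) (X (Suc \<beta>)) B B'"
    using step by simp
  also have "\<dots> = cross_ratio y (X \<alpha>) (X (Suc \<beta>)) B B'"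
    using step.prems step.hyps by (intro cross_ratio_mult) auto
  finally show ?case ..
qed

lemma cross_ratio_telescope:
  assumes "\<alpha> \<le> \<beta>" "\<gamma> \<le> \<delta>" and "\<forall>a\<in>{\<alpha>..\<beta>}. \<forall>b\<in>{\<gamma>..\<delta>}. y (X a) \<noteq> y (Y b)"
  shows "cross_ratio y (X \<alpha>) (X \<beta>) (Y \<gamma>) (Y \<delta>) =
     (\<Prod>a\<in>{\<alpha>..<\<beta>}. \<Prod>b\<in>{\<gamma>..<\<delta>}. cross_ratio y (X a) (X (Suc a)) (Y b) (Y (Suc b)))"
proof -
  have "cross_ratio y (X \<alpha>) (X \<beta>) (Y \<gamma>) (Y \<delta>) =
      (\<Prod>a\<in>{\<alpha>..<\<beta>}. cross_ratio y (X a) (X (Suc a)) (Y \<gamma>) (Y \<delta>))"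
    using assms by (intro cross_ratio_telescope_left) auto
  also have "\<dots> = (\<Prod>a\<in>{\<alpha>..<\<beta>}. \<Prod>b\<in>{\<gamma>..<\<delta>}. cross_ratio y (X a) (X (Suc a)) (Y b) (Y (Suc b)))"
  proof (intro prod.cong refl)
    fix a assume "a \<in> {\<alpha>..<\<beta>}"
    then have "a \<in> {\<alpha>..\<beta>}" "Suc a \<in> {\<alpha>..\<beta>}" by auto
    then have "\<forall>b\<in>{\<gamma>..\<delta>}. y (Y b) \<noteq> y (X a) \<and> y (Y b) \<noteq> y (X (Suc a))"
      using assms(3) by metis
    then show "cross_ratio y (X a) (X (Suc a)) (Y \<gamma>) (Y \<delta>) =
        (\<Prod>b\<in>{\<gamma>..<\<delta>}. cross_ratio y (X a) (X (Suc a)) (Y b) (Y (Suc b)))"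
      using assms(2) by (subst (1 2) cross_ratio_commute) (rule cross_ratio_telescope_left)
  qed
  finally show ?thesis .
qed

lemma eventually_perturbation_inj_on:
  assumes "inj_on z A" "finite A"
  shows "eventually (\<lambda>t. inj_on (\<lambda>i. z i + t * w i) A) (nhds (0::complex))"
proof -
  have "eventually (\<lambda>t. \<forall>a\<in>A. \<forall>b\<in>A. a \<noteq> b \<longrightarrow> z a + t * w a \<noteq> z b + t * w b) (nhds 0)"
  proof (intro eventually_ball_finite ballI assms(2))
    fix a b assume ab: "a \<in> A" "b \<in> A"
    show "eventually (\<lambda>t. a \<noteq> b \<longrightarrow> z a + t * w a \<noteq> z b + t * w b) (nhds 0)"
    proof (cases "a = b")
      case False
      have ne: "z a + 0 * w a - (z b + 0 * w b) \<noteq> 0"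
        using assms(1) ab False unfolding inj_on_def by auto
      have "((\<lambda>t. z a + t * w a - (z b + t * w b)) \<longlongrightarrow> z a + 0 * w a - (z b + 0 * w b)) (nhds 0)"
        by (intro tendsto_intros filterlim_ident)
      from tendsto_imp_eventually_ne[OF this ne] show ?thesis
        by (auto elim: eventually_mono)
    qed simp
  qed
  then show ?thesis by eventually_elim (auto simp: inj_on_def)
qed

lemma dlog_dir_prod:
  fixes P :: "'d set" and H :: "'d \<Rightarrow> (nat \<Rightarrow> complex) \<Rightarrow> complex"
  assumes fin: "finite P"
    and ev: "eventually (\<lambda>t. F (\<lambda>i. z i + t * w i) = (\<Prod>d\<in>P. H d (\<lambda>i. z i + t * w i))) (nhds 0)"
    and nz: "\<forall>d\<in>P. H d z \<noteq> 0"
    and df: "\<forall>d\<in>P. (\<lambda>t. H d (\<lambda>i. z i + t * w i)) field_differentiable at 0"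
  shows "dlog_dir F z w = (\<Sum>d\<in>P. dlog_dir (H d) z w)"
proof -
  define h where "h d t = H d (\<lambda>i. z i + t * w i)" for d t
  have h0: "h d 0 = H d z" for d unfolding h_def by simp
  have Fz: "F z = (\<Prod>d\<in>P. H d z)"
    using eventually_nhds_x_imp_x[OF ev] by simp
  have "deriv (\<lambda>t. F (\<lambda>i. z i + t * w i)) 0 = deriv (\<lambda>t. \<Prod>d\<in>P. h d t) 0"
    using ev unfolding h_def by (intro deriv_cong_ev) auto
  also have "\<dots> = (\<Prod>d\<in>P. H d z) * (\<Sum>d\<in>P. deriv (h d) 0 / H d z)"
    using has_field_derivative_prod'[of P h 0 "\<lambda>d. deriv (h d) 0"] nz df
    by (intro DERIV_imp_deriv) (auto simp: h0 h_def[abs_def] DERIV_deriv_iff_field_differentiable)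
  finally show ?thesis
    using nz fin unfolding dlog_dir_def Fz by (simp add: h_def[abs_def] sum_divide_distrib)
qed

lemma ucr_chord:
  assumes "conf n z" "is_chord n (a, b)"
  shows "ucr n z a b \<noteq> 0"
    and "(\<lambda>t. ucr n (\<lambda>i. z i + t * w i) a b) field_differentiable at 0"
proof -
  have "a < n" "b < n" using assms(2) by (auto simp: is_chord_def)
  then have lt: "a < n" "b < n" "Suc a mod n < n" "Suc b mod n < n" by auto
  have dist: "a \<noteq> b" "Suc a mod n \<noteq> Suc b mod n" "a \<noteq> Suc b mod n" "Suc a mod n \<noteq> b"
    using assms(2) by (auto simp: is_chord_def mod_Suc split: if_splits)
  have "z x \<noteq> z y" if "x < n" "y < n" "x \<noteq> y" for x y
    using assms(1) that unfolding conf_def inj_on_def by auto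
  then have ne: "z a - z b \<noteq> 0" "z (Suc a mod n) - z (Suc b mod n) \<noteq> 0"
     "z a - z (Suc b mod n) \<noteq> 0" "z (Suc a mod n) - z b \<noteq> 0"
    using lt dist by auto
  then show "ucr n z a b \<noteq> 0" by (simp add: ucr_def)
  show "(\<lambda>t. ucr n (\<lambda>i. z i + t * w i) a b) field_differentiable at 0"
    unfolding ucr_def using ne by (intro derivative_intros) auto
qed

lemma wedge_sum_expand:
  fixes G :: "'d \<Rightarrow> (nat \<Rightarrow> complex) \<Rightarrow> (nat \<Rightarrow> complex) \<Rightarrow> complex"
  assumes fin: "\<And>i. i < length fs \<Longrightarrow> finite (P i)"
    and dec: "\<And>i w. i < length fs \<Longrightarrow> (fs ! i) z w = (\<Sum>d\<in>P i. G d z w)"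
  shows "wedge fs z vs =
    (\<Sum>\<sigma>\<in>PiE {..<length fs} P. wedge (map (\<lambda>i. G (\<sigma> i)) [0..<length fs]) z vs)"
proof -
  let ?k = "length fs"
  let ?S = "{p. p permutes {..<?k}}"
  have "wedge fs z vs = (\<Sum>p\<in>?S. of_int (sign p) * (\<Prod>i<?k. \<Sum>d\<in>P i. G d z (vs (p i))))"
    unfolding wedge_def by (intro sum.cong refl arg_cong2[where f="(*)"] prod.cong) (auto simp: dec)
  also have "\<dots> = (\<Sum>p\<in>?S. of_int (sign p) * (\<Sum>\<sigma>\<in>PiE {..<?k} P. \<Prod>i<?k. G (\<sigma> i) z (vs (p i))))"
    by (intro sum.cong refl arg_cong2[where f="(*)"] prod_sum_PiE) (auto simp: fin)
  also have "\<dots> = (\<Sum>p\<in>?S. \<Sum>\<sigma>\<in>PiE {..<?k} P. of_int (sign p) * (\<Prod>i<?k. G (\<sigma> i) z (vs (p i))))"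
    by (simp add: sum_distrib_left)
  also have "\<dots> = (\<Sum>\<sigma>\<in>PiE {..<?k} P. \<Sum>p\<in>?S. of_int (sign p) * (\<Prod>i<?k. G (\<sigma> i) z (vs (p i))))"
    by (rule sum.swap)
  also have "\<dots> = (\<Sum>\<sigma>\<in>PiE {..<?k} P. wedge (map (\<lambda>i. G (\<sigma> i)) [0..<?k]) z vs)"
    unfolding wedge_def by (intro sum.cong refl arg_cong2[where f="(*)"] prod.cong) auto
  finally show ?thesis .
qed

lemma wedge_sum_expand_minus_leading:
  fixes G :: "'d \<Rightarrow> (nat \<Rightarrow> complex) \<Rightarrow> (nat \<Rightarrow> complex) \<Rightarrow> complex"
  assumes fin: "\<And>i. i < length fs \<Longrightarrow> finite (P i)"
    and lead: "\<And>i. i < length fs \<Longrightarrow> e i \<in> P i"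
    and dec: "\<And>i w. i < length fs \<Longrightarrow> (fs ! i) z w = (\<Sum>d\<in>P i. G d z w)"
  shows "wedge fs z vs - wedge (map (\<lambda>i. G (e i)) [0..<length fs]) z vs =
    (\<Sum>\<sigma>\<in>PiE {..<length fs} P - {restrict e {..<length fs}}.
       wedge (map (\<lambda>i. G (\<sigma> i)) [0..<length fs]) z vs)"
proof -
  define W where "W \<sigma> = wedge (map (\<lambda>i. G (\<sigma> i)) [0..<length fs]) z vs" for \<sigma> :: "nat \<Rightarrow> 'd"
  let ?A = "PiE {..<length fs} P" and ?e = "restrict e {..<length fs}"
  have "wedge fs z vs = (\<Sum>\<sigma>\<in>?A. W \<sigma>)"
    unfolding W_def using fin dec by (rule wedge_sum_expand)
  also have "\<dots> = W ?e + (\<Sum>\<sigma>\<in>?A - {?e}. W \<sigma>)"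
    using fin lead by (intro sum.remove finite_PiE) auto
  also have "W ?e = wedge (map (\<lambda>i. G (e i)) [0..<length fs]) z vs"
    unfolding W_def by (intro arg_cong[where f = "\<lambda>l. wedge l z vs"] map_cong) auto
  finally show ?thesis unfolding W_def by (simp only: add_diff_cancel_left')
qed

lemma mod_arc_iff_cyc_between:
  assumes "a < n" "x < n" "b < n" "a \<noteq> b"
  shows "(0 < (x + n - a) mod n \<and> (x + n - a) mod n \<le> (b + n - a) mod n) \<longleftrightarrow>
    cyc_between a x b \<or> x = b"
  using assms unfolding cyc_between_def by (auto simp: add_diff_mod_cases split: if_splits)

locale inscribed_polygon =
  fixes n :: nat and V :: "nat set"
  assumes n_ge_3: "3 \<le> n" and V_subset: "V \<subseteq> {..<n}" and card_V_ge_3: "3 \<le> card V"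
begin

abbreviation "m \<equiv> card V"

lemma finite_V: "finite V"
  using V_subset finite_subset by blast

lemma vert_less: "k < m \<Longrightarrow> vert V k < n"
  using V_subset finite_V unfolding vert_def
  by (metis lessThan_iff nth_mem set_sorted_list_of_set length_sorted_list_of_set subsetD)

lemma vert_strict_mono: "k < l \<Longrightarrow> l < m \<Longrightarrow> vert V k < vert V l"
  unfolding vert_def using sorted_wrt_nth_less[OF strict_sorted_list_of_set] by simp

lemma vert_less_iff: "k < m \<Longrightarrow> l < m \<Longrightarrow> vert V k < vert V l \<longleftrightarrow> k < l"
  using vert_strict_mono by (metis less_asym linorder_neqE_nat)

end

text \<open>Positions are rotated so that the vertex of \<open>E\<close> preceding vertex \<open>i\<close> sits at \<open>n - 1\<close>;
  the vertices \<open>i, i + 1, \<dots>\<close> of \<open>E\<close> then sit at increasing positions \<open>epos 0 < epos 1 < \<dots>\<close>.\<close>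
locale inscribed_polygon_vertex = inscribed_polygon +
  fixes i :: nat
  assumes i_less: "i < card V"
begin

definition "kprev = prevk m i"
definition "origin = Suc (vert V kprev) mod n"
definition "rpos x = cyc_unrot n origin x"
definition "rpoint k = cyc_rot n origin k"
definition "eidx t = (i + t) mod m"
definition "epos t = rpos (vert V (eidx t))"

lemma m_pos: "0 < m" and n_pos: "0 < n"
  using card_V_ge_3 n_ge_3 by auto

lemma kprev_eq: "kprev = (if i = 0 then m - 1 else i - 1)"
  unfolding kprev_def prevk_def using i_less card_V_ge_3 by (auto simp: mod_less_double)

lemma kprev_less: "kprev < m"
  using kprev_eq i_less card_V_ge_3 by auto

lemma eidx_less: "eidx t < m"
  unfolding eidx_def using m_pos by simp

lemma eidx_0: "eidx 0 = i"
  unfolding eidx_def using i_less by simp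

lemma eidx_last: "eidx (m - 1) = kprev"
  unfolding eidx_def kprev_def prevk_def using m_pos by (simp add: add.commute)

lemma prevk_eidx_Suc: "prevk m (eidx (Suc t)) = eidx t"
proof -
  have "prevk m (eidx (Suc t)) = ((i + Suc t) mod m + (m - 1)) mod m"
    unfolding prevk_def eidx_def using m_pos by (simp add: add.commute)
  also have "\<dots> = (i + Suc t + (m - 1)) mod m" by (simp add: mod_add_left_eq)
  also have "i + Suc t + (m - 1) = (i + t) + m" using m_pos by simp
  finally show ?thesis unfolding eidx_def by simp
qed

lemma prevk_eidx_0: "prevk m (eidx 0) = kprev"
  unfolding eidx_0 kprev_def ..

lemma origin_less: "origin < n"
  unfolding origin_def using n_pos by simp

lemma rpos_less: "rpos x < n"
  unfolding rpos_def using cyc_unrot_less n_pos by simp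

lemma rpoint_less: "rpoint k < n"
  unfolding rpoint_def using cyc_rot_less n_pos by simp

lemma rpos_rpoint: "k < n \<Longrightarrow> rpos (rpoint k) = k"
  unfolding rpos_def rpoint_def using origin_less by (simp add: cyc_unrot_rot)

lemma rpoint_rpos: "x < n \<Longrightarrow> rpoint (rpos x) = x"
  unfolding rpos_def rpoint_def using origin_less by (simp add: cyc_rot_unrot)

lemma rpoint_eq_iff: "k < n \<Longrightarrow> l < n \<Longrightarrow> rpoint k = rpoint l \<longleftrightarrow> k = l"
  by (metis rpos_rpoint)

lemma Suc_rpoint: "Suc (rpoint k) mod n = rpoint (Suc k)"
  unfolding rpoint_def by (rule Suc_cyc_rot)

lemma vert_eidx: "vert V (eidx t) = rpoint (epos t)"
  unfolding epos_def using rpoint_rpos vert_less eidx_less by simp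

lemma rpos_eq:
  assumes "x < n"
  shows "rpos x = (if vert V kprev < x then x - Suc (vert V kprev) else x + n - Suc (vert V kprev))"
proof (cases "Suc (vert V kprev) < n")
  case True
  then show ?thesis
    unfolding rpos_def origin_def using assms by (simp add: cyc_unrot_eq)
next
  case False
  then have "vert V kprev = n - 1" using vert_less[OF kprev_less] by simp
  then show ?thesis unfolding rpos_def origin_def cyc_unrot_def using assms n_pos by simp
qed

lemma rpos_vert:
  "k < m \<Longrightarrow> rpos (vert V k) =
     (if kprev < k then vert V k - Suc (vert V kprev) else vert V k + n - Suc (vert V kprev))"
  using rpos_eq[OF vert_less] vert_less_iff[OF kprev_less] by simp

lemma epos_strict_mono:
  assumes "t1 < t2" "t2 < m"
  shows "epos t1 < epos t2"
proof -
  define a where "a = eidx t1"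
  define b where "b = eidx t2"
  have ab: "a < m" "b < m" unfolding a_def b_def by (auto simp: eidx_less)
  have "(kprev < a \<and> kprev < b \<and> a < b) \<or> (a \<le> kprev \<and> b \<le> kprev \<and> a < b) \<or> (kprev < a \<and> b \<le> kprev)"
    unfolding a_def b_def eidx_def using assms i_less
    by (simp add: kprev_eq mod_less_double) arith
  then have "rpos (vert V a) < rpos (vert V b)"
  proof (elim disjE conjE)
    assume "kprev < a" "kprev < b" "a < b"
    then show ?thesis using vert_strict_mono[of a b] vert_strict_mono[of kprev a] ab
      by (simp add: rpos_vert)
  next
    assume "a \<le> kprev" "b \<le> kprev" "a < b"
    then show ?thesis using vert_strict_mono[of a b] ab vert_less[OF kprev_less]
      by (simp add: rpos_vert)
  next
    assume "kprev < a" "b \<le> kprev"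
    then show ?thesis using vert_less[OF ab(1)] vert_less[OF kprev_less] vert_strict_mono[of kprev a] ab
      by (simp add: rpos_vert)
  qed
  then show ?thesis unfolding epos_def a_def b_def .
qed

lemma epos_mono: "t1 \<le> t2 \<Longrightarrow> t2 < m \<Longrightarrow> epos t1 \<le> epos t2"
  using epos_strict_mono by (cases "t1 = t2") (auto intro: less_imp_le)

lemma rpos_vert_kprev: "rpos (vert V kprev) = n - 1"
  using rpos_vert[OF kprev_less] vert_less[OF kprev_less] by simp

lemma epos_last: "epos (m - 1) = n - 1"
  unfolding epos_def eidx_last by (rule rpos_vert_kprev)

lemma epos_less_last: "t < m - 1 \<Longrightarrow> epos t < n - 1"
  using epos_strict_mono[of t "m - 1"] m_pos epos_last by simp

lemma epos_less: "epos t < n"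
  unfolding epos_def by (rule rpos_less)

lemma E_side_arc_epos:
  assumes t: "t < m" and x: "x \<in> E_side_arc n V (eidx t)"
  shows "x < n" "t = 0 \<or> epos (t - 1) < rpos x" "rpos x \<le> epos t"
proof -
  define a where "a = vert V (prevk m (eidx t))"
  have a: "a < n" unfolding a_def prevk_def using vert_less m_pos by simp
  have b: "vert V (eidx t) < n" using vert_less eidx_less by simp
  have ra: "rpos a = (if t = 0 then n - 1 else epos (t - 1))"
    unfolding a_def using prevk_eidx_Suc[of "t - 1"] prevk_eidx_0 rpos_vert_kprev
    by (cases t) (auto simp: epos_def)
  have ra_ne: "rpos a \<noteq> epos t"
    unfolding ra using epos_less_last[of 0] epos_strict_mono[of "t - 1" t] card_V_ge_3 t by auto
  show "x < n" using x unfolding E_side_arc_def by (simp add: Let_def)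
  then have "0 < (x + n - a) mod n \<and> (x + n - a) mod n \<le> (vert V (eidx t) + n - a) mod n"
    using x unfolding E_side_arc_def a_def Let_def by simp
  moreover have "(y + n - a) mod n = (rpos y + n - rpos a) mod n" if "y < n" for y
    unfolding rpos_def using a that origin_less by (rule cyc_unrot_rebase)
  ultimately have "cyc_between (rpos a) (rpos x) (epos t) \<or> rpos x = epos t"
    using mod_arc_iff_cyc_between[OF rpos_less rpos_less epos_less ra_ne] \<open>x < n\<close> b
    unfolding epos_def by simp
  then show "t = 0 \<or> epos (t - 1) < rpos x" "rpos x \<le> epos t"
    unfolding ra cyc_between_def using epos_less_last[of 0] epos_strict_mono[of "t - 1" t]
      card_V_ge_3 t rpos_less[of x] by (auto split: if_splits)
qed

lemma E_chord_gap:
  assumes "epos t + 1 < epos (Suc t)" "Suc t < m"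
  shows "(rpoint (epos t), rpoint (epos (Suc t))) \<in> E_chords n V"
proof -
  have "Suc (epos t) < n" using assms epos_less[of "Suc t"] by simp
  then have "rpoint (epos (Suc t)) \<noteq> Suc (rpoint (epos t)) mod n"
    using assms(1) epos_less[of "Suc t"] by (simp add: Suc_rpoint rpoint_eq_iff)
  then show ?thesis unfolding E_chords_def using prevk_eidx_Suc[of t] eidx_less[of "Suc t"]
    by (intro CollectI exI[of _ "eidx (Suc t)"]) (simp add: vert_eidx)
qed

lemma E_chord_wrap:
  assumes "0 < epos 0"
  shows "(rpoint (n - 1), rpoint (epos 0)) \<in> E_chords n V"
proof -
  have "Suc (rpoint (n - 1)) mod n = rpoint 0"
    using n_pos by (simp add: rpoint_def cyc_rot_def mod_Suc_eq)
  then have "rpoint (epos 0) \<noteq> Suc (rpoint (n - 1)) mod n"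
    using assms epos_less[of 0] n_pos by (simp add: rpoint_eq_iff)
  moreover have "rpoint (n - 1) = vert V kprev"
    using rpos_vert_kprev rpoint_rpos vert_less[OF kprev_less] by metis
  ultimately show ?thesis unfolding E_chords_def using prevk_eidx_0 i_less
    by (intro CollectI exI[of _ i]) (simp add: vert_eidx[of 0, unfolded eidx_0] kprev_def)
qed

lemma crosses_rpoint:
  "a < n \<Longrightarrow> b < n \<Longrightarrow> e1 < n \<Longrightarrow> e2 < n \<Longrightarrow> distinct [a, b, e1, e2] \<Longrightarrow>
    cyc_between a e1 b \<noteq> cyc_between a e2 b \<Longrightarrow>
    crosses n (rpoint a, rpoint b) (rpoint e1, rpoint e2)"
  unfolding rpoint_def using origin_less by (simp add: crosses_cyc_rot)

lemma crosses_E_chord_gap: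
  assumes "Suc t < m" "epos t < x" "x < epos (Suc t)" "y < n" "y < epos t \<or> epos (Suc t) < y"
  shows "\<exists>e\<in>E_chords n V. crosses n (rpoint x, rpoint y) e \<and> crosses n (rpoint y, rpoint x) e"
proof
  show "(rpoint (epos t), rpoint (epos (Suc t))) \<in> E_chords n V"
    using assms by (intro E_chord_gap) auto
  show "crosses n (rpoint x, rpoint y) (rpoint (epos t), rpoint (epos (Suc t))) \<and>
      crosses n (rpoint y, rpoint x) (rpoint (epos t), rpoint (epos (Suc t)))"
    using assms epos_less[of t] epos_less[of "Suc t"]
    by (auto intro!: crosses_rpoint simp: cyc_between_def)
qed

lemma crosses_E_chord_wrap:
  assumes "x < epos 0" "epos 0 < y" "y < n - 1"
  shows "\<exists>e\<in>E_chords n V. crosses n (rpoint x, rpoint y) e"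
proof
  show "(rpoint (n - 1), rpoint (epos 0)) \<in> E_chords n V"
    using assms by (intro E_chord_wrap) auto
  show "crosses n (rpoint x, rpoint y) (rpoint (n - 1), rpoint (epos 0))"
    using assms epos_less[of 0] by (intro crosses_rpoint) (auto simp: cyc_between_def)
qed

end

definition psi_expansion :: "nat \<Rightarrow> nat set \<Rightarrow> (nat \<Rightarrow> nat) \<Rightarrow> nat \<times> nat \<Rightarrow> (nat \<times> nat) set \<Rightarrow> bool" where
  "psi_expansion n V sel c P \<longleftrightarrow> finite P \<and> E_chord_in_S V c \<in> P \<and>
     (\<forall>d\<in>P. is_chord n d \<and> (d \<noteq> E_chord_in_S V c \<longrightarrow> (\<exists>e\<in>E_chords n V. crosses n d e))) \<and>
     (\<forall>z w. conf n z \<longrightarrow> psi_omega V sel c z w = (\<Sum>d\<in>P. omega_chord n d z w))"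

locale inscribed_polygon_chord = inscribed_polygon_vertex +
  fixes sel :: "nat \<Rightarrow> nat" and j :: nat
  assumes sel_arc: "\<forall>k < card V. sel k \<in> E_side_arc n V k"
    and chord: "is_chord (card V) (i, j)"
begin

definition "t_j = (if i \<le> j then j - i else j + m - i)"

text \<open>\<open>\<alpha>, \<beta>\<close> (resp. \<open>\<gamma>, \<delta>\<close>) are the rotated positions of the chosen sides of \<open>S'\<close> on either
  side of the end \<open>i\<close> (resp. \<open>j\<close>) of the chord; its form splits over the chords of \<open>S\<close> with ends in
  \<open>[\<alpha>, \<beta>) \<times> [\<gamma>, \<delta>)\<close>.\<close>
definition "\<alpha> = rpos (sel i)"
definition "\<beta> = rpos (sel (Suc i mod m))"
definition "\<gamma> = rpos (sel j)"
definition "\<delta> = rpos (sel (Suc j mod m))"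
definition "chord_box = {\<alpha>..<\<beta>} \<times> {\<gamma>..<\<delta>}"

lemma j_less: "j < m"
  using chord by (simp add: is_chord_def)

lemma eidx_t_j: "eidx t_j = j"
  unfolding eidx_def t_j_def using i_less j_less by (auto simp: mod_less_double)

lemma eidx_Suc_t_j: "eidx (Suc t_j) = Suc j mod m"
  by (metis eidx_def eidx_t_j mod_Suc_eq add_Suc_right)

lemma eidx_1: "eidx 1 = Suc i mod m"
  unfolding eidx_def by simp

lemma t_j_bounds: "2 \<le> t_j" "Suc t_j < m"
proof -
  have "t_j < m" unfolding t_j_def using i_less j_less by auto
  have ij: "i \<noteq> j" "j \<noteq> Suc i mod m" "i \<noteq> Suc j mod m"
    using chord by (auto simp: is_chord_def)
  then have "t_j \<noteq> 0" "t_j \<noteq> 1"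
    using eidx_t_j eidx_0 eidx_1 by metis+
  then show "2 \<le> t_j" by simp
  have "eidx m = i" unfolding eidx_def using i_less by simp
  then have "Suc t_j \<noteq> m" using eidx_Suc_t_j ij by auto
  with \<open>t_j < m\<close> show "Suc t_j < m" by simp
qed

lemma sel_eidx:
  assumes "t < m"
  shows "sel (eidx t) < n" "t = 0 \<or> epos (t - 1) < rpos (sel (eidx t))" "rpos (sel (eidx t)) \<le> epos t"
  using E_side_arc_epos[OF assms] sel_arc eidx_less by auto

lemma sel_bounds:
  "rpos (sel i) \<le> epos 0" "epos 0 < rpos (sel (Suc i mod m))" "rpos (sel (Suc i mod m)) \<le> epos 1"
  "epos (t_j - 1) < rpos (sel j)" "rpos (sel j) \<le> epos t_j"
  "epos t_j < rpos (sel (Suc j mod m))" "rpos (sel (Suc j mod m)) \<le> epos (Suc t_j)"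
  "sel i < n" "sel (Suc i mod m) < n" "sel j < n" "sel (Suc j mod m) < n"
  using sel_eidx[of 0] sel_eidx[of 1] sel_eidx[of t_j] sel_eidx[of "Suc t_j"] t_j_bounds card_V_ge_3
  unfolding eidx_0 eidx_1 eidx_t_j eidx_Suc_t_j by auto

lemma rpoint_corners:
  "rpoint \<alpha> = sel i" "rpoint \<beta> = sel (Suc i mod m)" "rpoint \<gamma> = sel j" "rpoint \<delta> = sel (Suc j mod m)"
  unfolding \<alpha>_def \<beta>_def \<gamma>_def \<delta>_def using sel_bounds by (simp_all add: rpoint_rpos)

lemma box_bounds:
  "\<alpha> \<le> epos 0" "epos 0 < \<beta>" "\<beta> \<le> epos 1" "epos 1 \<le> epos (t_j - 1)" "epos (t_j - 1) < \<gamma>"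
  "\<gamma> \<le> epos t_j" "epos t_j < \<delta>" "\<delta> \<le> epos (Suc t_j)" "epos (Suc t_j) \<le> n - 1"
  unfolding \<alpha>_def \<beta>_def \<gamma>_def \<delta>_def
  using sel_bounds epos_mono[of 1 "t_j - 1"] epos_mono[of "Suc t_j" "m - 1"] epos_last t_j_bounds
  by auto

lemma leading_chord_in_box: "(epos 0, epos t_j) \<in> chord_box"
  unfolding chord_box_def using box_bounds by auto

lemma E_chord_in_S_eq: "E_chord_in_S V (i, j) = (rpoint (epos 0), rpoint (epos t_j))"
  unfolding E_chord_in_S_def using vert_eidx[of 0] vert_eidx[of t_j] by (simp add: eidx_0 eidx_t_j)

lemma box_less:
  assumes "(a, b) \<in> chord_box"
  shows "a < n" "b < n" "a + 2 \<le> b" "Suc b < n"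
proof -
  have "epos 0 < epos 1" using epos_strict_mono card_V_ge_3 by simp
  then show "a + 2 \<le> b" "Suc b < n" using assms box_bounds by (auto simp: chord_box_def)
  then show "a < n" "b < n" by auto
qed

lemma box_is_chord:
  assumes "(a, b) \<in> chord_box"
  shows "is_chord n (rpoint a, rpoint b)"
  using box_less[OF assms] rpoint_less by (auto simp: is_chord_def Suc_rpoint rpoint_eq_iff)

lemma box_crosses_E_chord:
  assumes ab: "(a, b) \<in> chord_box" and ne: "(a, b) \<noteq> (epos 0, epos t_j)"
  shows "\<exists>e\<in>E_chords n V. crosses n (rpoint a, rpoint b) e"
proof -
  have a: "\<alpha> \<le> a" "a < \<beta>" and b: "\<gamma> \<le> b" "b < \<delta>"
    using ab by (auto simp: chord_box_def)
  have mono: "epos 0 < epos 1" "epos 1 < epos t_j" "epos t_j < epos (Suc t_j)"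
    using epos_strict_mono t_j_bounds by auto
  note bounds = box_bounds box_less[OF ab] t_j_bounds
  consider "a < epos 0" | "epos 0 < a" | "a = epos 0" "b < epos t_j" | "a = epos 0" "epos t_j < b"
    using ne by fastforce
  then show ?thesis
  proof cases
    case 1
    then show ?thesis using a b mono bounds by (intro crosses_E_chord_wrap) auto
  next
    case 2
    then show ?thesis using a b mono bounds crosses_E_chord_gap[of 0 a b] by auto
  next
    case 3
    then show ?thesis using a b mono bounds crosses_E_chord_gap[of "t_j - 1" b a] by auto
  next
    case 4
    then show ?thesis using 4 a b mono bounds crosses_E_chord_gap[of t_j b a] by auto
  qed
qed

lemma cross_ratio_corners_eq_prod_box:
  assumes "inj_on y {..<n}"
  shows "cross_ratio y (rpoint \<alpha>) (rpoint \<beta>) (rpoint \<gamma>) (rpoint \<delta>) =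
    (\<Prod>ab\<in>chord_box. ucr n y (rpoint (fst ab)) (rpoint (snd ab)))"
proof -
  have "\<forall>a\<in>{\<alpha>..\<beta>}. \<forall>b\<in>{\<gamma>..\<delta>}. y (rpoint a) \<noteq> y (rpoint b)"
  proof (intro ballI)
    fix a b assume "a \<in> {\<alpha>..\<beta>}" "b \<in> {\<gamma>..\<delta>}"
    then have "a < b" "b < n" using box_bounds by auto
    then have "rpoint a \<noteq> rpoint b" by (simp add: rpoint_eq_iff)
    then show "y (rpoint a) \<noteq> y (rpoint b)"
      using assms rpoint_less unfolding inj_on_def by blast
  qed
  moreover have "\<alpha> \<le> \<beta>" "\<gamma> \<le> \<delta>" using box_bounds by auto
  ultimately have "cross_ratio y (rpoint \<alpha>) (rpoint \<beta>) (rpoint \<gamma>) (rpoint \<delta>) =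
      (\<Prod>a\<in>{\<alpha>..<\<beta>}. \<Prod>b\<in>{\<gamma>..<\<delta>}. cross_ratio y (rpoint a) (rpoint (Suc a)) (rpoint b) (rpoint (Suc b)))"
    by (intro cross_ratio_telescope)
  then show ?thesis
    unfolding chord_box_def by (simp add: ucr_eq_cross_ratio Suc_rpoint prod.cartesian_product split_def)
qed

lemma psi_omega_eq_sum_box:
  assumes z: "conf n z"
  shows "psi_omega V sel (i, j) z w = (\<Sum>ab\<in>chord_box. omega_chord n (rpoint (fst ab), rpoint (snd ab)) z w)"
proof -
  define F where "F y = cross_ratio y (rpoint \<alpha>) (rpoint \<beta>) (rpoint \<gamma>) (rpoint \<delta>)" for y
  define H where "H ab y = ucr n y (rpoint (fst ab)) (rpoint (snd ab))" for ab :: "nat \<times> nat" and y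
  have psi: "psi_omega V sel (i, j) = omega_of F"
    unfolding psi_omega_def F_def rpoint_corners ucr_def cross_ratio_def by simp
  have "eventually (\<lambda>t. inj_on (\<lambda>k. z k + t * w k) {..<n}) (nhds 0)"
    using z unfolding conf_def by (intro eventually_perturbation_inj_on) auto
  then have "eventually (\<lambda>t. F (\<lambda>k. z k + t * w k) = (\<Prod>ab\<in>chord_box. H ab (\<lambda>k. z k + t * w k))) (nhds 0)"
    by eventually_elim (simp add: F_def H_def cross_ratio_corners_eq_prod_box)
  moreover have "\<forall>ab\<in>chord_box. is_chord n (rpoint (fst ab), rpoint (snd ab))"
    using box_is_chord by auto
  ultimately have "dlog_dir F z w = (\<Sum>ab\<in>chord_box. dlog_dir (H ab) z w)"
    using ucr_chord[OF z] unfolding H_def by (intro dlog_dir_prod) (auto simp: chord_box_def)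
  then show ?thesis
    unfolding psi omega_of_def omega_chord_def H_def by (simp add: sum_divide_distrib)
qed

lemma psi_expansion_box:
  "psi_expansion n V sel (i, j) ((\<lambda>ab. (rpoint (fst ab), rpoint (snd ab))) ` chord_box)"
proof -
  let ?f = "\<lambda>ab. (rpoint (fst ab), rpoint (snd ab))"
  have inj: "inj_on ?f chord_box"
    by (rule inj_onI) (auto simp: box_less rpoint_eq_iff)
  have "finite chord_box" unfolding chord_box_def by simp
  moreover have "E_chord_in_S V (i, j) \<in> ?f ` chord_box"
    unfolding E_chord_in_S_eq using leading_chord_in_box by force
  moreover have "\<forall>d\<in>?f ` chord_box. is_chord n d \<and>
      (d \<noteq> E_chord_in_S V (i, j) \<longrightarrow> (\<exists>e\<in>E_chords n V. crosses n d e))"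
    unfolding E_chord_in_S_eq using box_is_chord box_crosses_E_chord box_less epos_less
    by (auto simp: rpoint_eq_iff)
  moreover have "psi_omega V sel (i, j) z w = (\<Sum>d\<in>?f ` chord_box. omega_chord n d z w)" if "conf n z" for z w
    unfolding psi_omega_eq_sum_box[OF that] sum.reindex[OF inj] by simp
  ultimately show ?thesis unfolding psi_expansion_def by blast
qed

end

lemma psi_expansion_exists:
  assumes "3 \<le> n" "V \<subseteq> {..<n}" "3 \<le> card V" "\<forall>k < card V. sel k \<in> E_side_arc n V k"
    and "is_chord (card V) c"
  shows "\<exists>P. psi_expansion n V sel c P"
proof -
  obtain i j where c: "c = (i, j)" by fastforce
  interpret inscribed_polygon_chord n V i sel j
    using assms unfolding c by unfold_locales (auto simp: is_chord_def)
  show ?thesis unfolding c using psi_expansion_box by blast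
qed

abbreviation leading_choice :: "nat set \<Rightarrow> (nat \<times> nat) list \<Rightarrow> nat \<Rightarrow> nat \<times> nat" where
  "leading_choice V cs \<equiv> restrict (\<lambda>i. E_chord_in_S V (cs ! i)) {..<length cs}"

lemma wedge_psi_omega_minus_leading:
  assumes exp: "\<forall>i < length cs. psi_expansion n V sel (cs ! i) (P i)" and z: "conf n z"
  shows "wedge (map (psi_omega V sel) cs) z vs
      - wedge (map (\<lambda>c. omega_chord n (E_chord_in_S V c)) cs) z vs
    = (\<Sum>\<sigma>\<in>PiE {..<length cs} P - {leading_choice V cs}.
        wedge (map (omega_chord n) (map \<sigma> [0..<length cs])) z vs)"
proof -
  let ?fs = "map (psi_omega V sel) cs"
  have "wedge ?fs z vs
      - wedge (map (\<lambda>i. omega_chord n (E_chord_in_S V (cs ! i))) [0..<length ?fs]) z vs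
    = (\<Sum>\<sigma>\<in>PiE {..<length ?fs} P - {restrict (\<lambda>i. E_chord_in_S V (cs ! i)) {..<length ?fs}}.
        wedge (map (\<lambda>i. omega_chord n (\<sigma> i)) [0..<length ?fs]) z vs)"
    using exp z by (intro wedge_sum_expand_minus_leading) (auto simp: psi_expansion_def)
  moreover have "map (\<lambda>i. omega_chord n (E_chord_in_S V (cs ! i))) [0..<length cs] =
      map (\<lambda>c. omega_chord n (E_chord_in_S V c)) cs"
    by (rule nth_equalityI) auto
  ultimately show ?thesis by (simp add: comp_def)
qed

lemma non_leading_choice_crosses:
  assumes exp: "\<forall>i < length cs. psi_expansion n V sel (cs ! i) (P i)"
    and \<sigma>: "\<sigma> \<in> PiE {..<length cs} P - {leading_choice V cs}"
  shows "\<forall>c \<in> set (map \<sigma> [0..<length cs]). is_chord n c"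
    and "\<exists>c \<in> set (map \<sigma> [0..<length cs]). \<exists>e \<in> E_chords n V. crosses n c e"
proof -
  show "\<forall>c \<in> set (map \<sigma> [0..<length cs]). is_chord n c"
    using exp \<sigma> by (auto simp: psi_expansion_def PiE_iff)
  obtain i where i: "i < length cs" "\<sigma> i \<noteq> E_chord_in_S V (cs ! i)"
    using \<sigma> by (metis DiffE PiE_restrict insertI1 lessThan_iff restrict_ext)
  then have "\<exists>e \<in> E_chords n V. crosses n (\<sigma> i) e"
    using exp \<sigma> by (auto simp: psi_expansion_def PiE_iff)
  then show "\<exists>c \<in> set (map \<sigma> [0..<length cs]). \<exists>e \<in> E_chords n V. crosses n c e"
    using i by auto
qed

theorem lemma4:
  fixes n :: nat and V :: "nat set" and sel :: "nat \<Rightarrow> nat"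
    and cs :: "(nat \<times> nat) list"
  assumes "3 \<le> n"
    and "V \<subseteq> {..<n}" and "3 \<le> card V"
    and "\<forall>k < card V. sel k \<in> E_side_arc n V k"
    and "\<forall>c \<in> set cs. is_chord (card V) c"
  shows "\<exists>(ds :: (nat \<times> nat) list list) (a :: nat \<Rightarrow> complex).
     (\<forall>d \<in> set ds. length d = length cs \<and> (\<forall>c \<in> set d. is_chord n c)
        \<and> (\<exists>c \<in> set d. \<exists>e \<in> E_chords n V. crosses n c e)) \<and>
     (\<forall>z vs. conf n z \<longrightarrow>
        wedge (map (psi_omega V sel) cs) z vs
          - wedge (map (\<lambda>c. omega_chord n (E_chord_in_S V c)) cs) z vs
        = (\<Sum>i < length ds. a i * wedge (map (omega_chord n) (ds ! i)) z vs))"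
proof -
  have "\<forall>i < length cs. \<exists>P. psi_expansion n V sel (cs ! i) P"
    using psi_expansion_exists[OF assms(1-4)] assms(5) by simp
  then obtain P where exp: "\<forall>i < length cs. psi_expansion n V sel (cs ! i) (P i)"
    by metis
  define A where "A = PiE {..<length cs} P - {leading_choice V cs}"
  have "finite A"
    unfolding A_def using exp by (auto simp: psi_expansion_def intro!: finite_PiE)
  then obtain xs where xs: "distinct xs" "set xs = A"
    using finite_distinct_list by blast
  define ds where "ds = map (\<lambda>\<sigma>. map \<sigma> [0..<length cs]) xs"
  have "\<forall>d \<in> set ds. length d = length cs \<and> (\<forall>c \<in> set d. is_chord n c)
      \<and> (\<exists>c \<in> set d. \<exists>e \<in> E_chords n V. crosses n c e)"
    using non_leading_choice_crosses[OF exp] xs unfolding ds_def A_def by auto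
  moreover have "wedge (map (psi_omega V sel) cs) z vs
      - wedge (map (\<lambda>c. omega_chord n (E_chord_in_S V c)) cs) z vs
    = (\<Sum>i < length ds. 1 * wedge (map (omega_chord n) (ds ! i)) z vs)" if "conf n z" for z vs
    unfolding wedge_psi_omega_minus_leading[OF exp that] A_def[symmetric] xs(2)[symmetric]
    by (simp add: sum_list_distinct_conv_sum_set[OF xs(1), symmetric] sum_list_sum_nth ds_def
        atLeast0LessThan)
  ultimately show ?thesis
    by (intro exI[of _ ds] exI[of _ "\<lambda>_. 1"]) blast
qed

end
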